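(* Let $\mathsf P$ be a rider piece having three distinct basic moves $m_1=(c_1,d_1)$, $m_2=(c_2,d_2)$, $m_3=(c_3,d_3)$, and let $q=3$ on the square board $[0,1]^2$. Let $w_1,w_2,w_3$ be nonzero integers with $\gcd(w_1,w_2,w_3)=1$ and $w_1m_1+w_2m_2+w_3m_3=(0,0)$. Consider a triangular configuration $\mathbf z=(z_1,z_2,z_3)$ of three pieces (a nondegenerate triangle with vertices in $[0,1]^2$) in which the pieces attack pairwise along the three distinct move directions $m_1,m_2,m_3$ (i.e. $\mathbf z$ lies in three move hyperplanes, one for each pair of pieces, using the three different moves), together with three fixations that fix its position in the square (i.e. these three move equations and three fixations have $\mathbf z$ as their unique common solution). Then $\mathbf z$ is a vertex of the inside-out polytope $([0,1]^6,\mathcal A_{\mathsf P})$ and its denominator is $$\Delta(\mathbf z)=\max(|w_1c_1|,|w_1d_1|,|w_2c_2|,|w_2d_2|,|w_3c_3|,|w_3d_3|).$$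
   Context: A rider piece has a finite set of basic moves: nonzero integer vectors $(c,d)$ with $\gcd(c,d)=1$, no two parallel (so $w_1,w_2,w_3$ exist and are unique up to simultaneous negation). For $3$ pieces, configurations are points $(z_1,z_2,z_3)\in\mathbb R^6$, $z_i=(x_i,y_i)$; the move hyperplane for move $(c,d)$ and pieces $i,j$ is $\mathcal H^{d/c}_{ij}=\{(z_j-z_i)\cdot(d,-c)=0\}$, and $\mathcal A_{\mathsf P}$ is the set of all these. A fixation is one of the equations $x_i=0$, $y_i=0$, $x_i=1$, $y_i=1$. A vertex of $([0,1]^6,\mathcal A_{\mathsf P})$ is a point of $[0,1]^6$ that is the unique common solution of some move equations and fixations. $\Delta(\mathbf z)$ is the least common denominator of the coordinates of $\mathbf z$. *)

theory Defs
  imports Main "HOL-Library.Numeral_Type" Complex_Main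
begin

definition rider_piece :: "(int \<times> int) set \<Rightarrow> bool" where
  "rider_piece M \<longleftrightarrow> finite M \<and>
     (\<forall>(c,d)\<in>M. gcd c d = 1) \<and>
     (\<forall>(c,d)\<in>M. \<forall>(c',d')\<in>M. (c,d) \<noteq> (c',d') \<longrightarrow> c * d' \<noteq> d * c')"

datatype piece = P1 | P2 | P3

type_synonym config = "piece \<Rightarrow> real \<times> real"

definition in_box :: "config \<Rightarrow> bool" where
  "in_box z \<longleftrightarrow> (\<forall>i. fst (z i) \<in> {0..1} \<and> snd (z i) \<in> {0..1})"

datatype coord = CX | CY

datatype eqn = MoveEq "int \<times> int" piece piece | Fixation coord piece real

fun sat :: "eqn \<Rightarrow> config \<Rightarrow> bool" where
  "sat (MoveEq (c,d) i j) z \<longleftrightarrow>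
     (fst (z j) - fst (z i)) * of_int d - (snd (z j) - snd (z i)) * of_int c = 0"
| "sat (Fixation CX i a) z \<longleftrightarrow> fst (z i) = a"
| "sat (Fixation CY i a) z \<longleftrightarrow> snd (z i) = a"

definition move_eqn :: "(int \<times> int) set \<Rightarrow> eqn \<Rightarrow> bool" where
  "move_eqn M e \<longleftrightarrow> (\<exists>m i j. m \<in> M \<and> i \<noteq> j \<and> e = MoveEq m i j)"

definition fixation :: "eqn \<Rightarrow> bool" where
  "fixation e \<longleftrightarrow> (\<exists>k i a. a \<in> {0, 1} \<and> e = Fixation k i a)"

definition solutions :: "eqn set \<Rightarrow> config set" where
  "solutions E = {v. \<forall>e\<in>E. sat e v}"

definition is_vertex :: "(int \<times> int) set \<Rightarrow> config \<Rightarrow> bool" where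
  "is_vertex M z \<longleftrightarrow> in_box z \<and>
     (\<exists>E. (\<forall>e\<in>E. move_eqn M e \<or> fixation e) \<and> solutions E = {z})"

definition Delta :: "config \<Rightarrow> nat" where
  "Delta z = (LEAST D::nat. D > 0 \<and>
     (\<forall>i. of_nat D * fst (z i) \<in> \<int> \<and> of_nat D * snd (z i) \<in> \<int>))"

end

(*
  Each move equation satisfied by the triangle makes one of its sides a real multiple of the
  corresponding move. Since m1 and m2 are independent, the real linear relations among m1, m2,
  m3 are the multiples of (w1, w2, w3), so the sides are l w1 m1, l w2 m2, l w3 m3 (up to sign)
  for a single real l: the configuration is a translate of l times an integer triangle.

  Move equations are invariant under translations and homotheties, so fixations that pin the
  configuration down must fix some x and some y coordinate at 0 or 1, and must force some
  coordinate to take both values 0 and 1; with the box constraint the latter gives |l| = 1/N,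
  where N is the largest of the |wi ci|, |wi di|. Hence N z is integral. Conversely, if D z is
  integral then N divides all D wi ci and D wi di, and coprimality of the moves and of the
  weights gives that N divides D.
*)
theory Submission
  imports Defs
begin

lemma UNIV_piece: "(UNIV :: piece set) = {P1, P2, P3}"
  using piece.exhaust by auto

instance piece :: finite
  by standard (simp add: UNIV_piece)

definition clears_denominators :: "real \<Rightarrow> config \<Rightarrow> bool" where
  "clears_denominators r z \<longleftrightarrow> (\<forall>i. r * fst (z i) \<in> \<int> \<and> r * snd (z i) \<in> \<int>)"

lemma Delta_eqI:
  assumes "N > 0" "clears_denominators (of_nat N) z"
    and "\<And>D. D > 0 \<Longrightarrow> clears_denominators (of_nat D) z \<Longrightarrow> N dvd D"
  shows "Delta z = N"
  unfolding Delta_def clears_denominators_def[symmetric]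
  by (rule Least_equality) (use assms in \<open>auto intro: dvd_imp_le\<close>)

definition homothety :: "real \<Rightarrow> real \<Rightarrow> real \<Rightarrow> config \<Rightarrow> config" where
  "homothety \<mu> a b z = (\<lambda>k. (a + \<mu> * fst (z k), b + \<mu> * snd (z k)))"

lemma sat_MoveEq_homothety:
  assumes "sat (MoveEq m i j) z"
  shows "sat (MoveEq m i j) (homothety \<mu> a b z)"
proof -
  obtain c d where m: "m = (c, d)" by fastforce
  have "(fst (homothety \<mu> a b z j) - fst (homothety \<mu> a b z i)) * of_int d
      - (snd (homothety \<mu> a b z j) - snd (homothety \<mu> a b z i)) * of_int c
      = \<mu> * ((fst (z j) - fst (z i)) * of_int d - (snd (z j) - snd (z i)) * of_int c)"
    by (simp add: homothety_def algebra_simps)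
  with assms show ?thesis by (simp add: m)
qed

lemma vertex_fixed_by_homothety:
  assumes "is_vertex M z"
    and "\<And>i. fst (z i) \<in> {0, 1} \<Longrightarrow> a + \<mu> * fst (z i) = fst (z i)"
    and "\<And>i. snd (z i) \<in> {0, 1} \<Longrightarrow> b + \<mu> * snd (z i) = snd (z i)"
  shows "homothety \<mu> a b z = z"
proof -
  obtain E where E: "\<forall>e\<in>E. move_eqn M e \<or> fixation e" and sol: "solutions E = {z}"
    using assms(1) unfolding is_vertex_def by blast
  have "sat e (homothety \<mu> a b z)" if "e \<in> E" for e
  proof -
    have "sat e z" using sol that unfolding solutions_def by blast
    from E that consider (move) m i j where "e = MoveEq m i j"
      | (fixed) k i v where "e = Fixation k i v" "v \<in> {0, 1}"
      unfolding move_eqn_def fixation_def by blast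
    then show ?thesis
    proof cases
      case move
      then show ?thesis using \<open>sat e z\<close> sat_MoveEq_homothety by simp
    next
      case fixed
      then show ?thesis using \<open>sat e z\<close> assms(2,3)
        by (cases k) (auto simp: homothety_def)
    qed
  qed
  then have "homothety \<mu> a b z \<in> solutions E" unfolding solutions_def by blast
  with sol show ?thesis by simp
qed

lemma vertex_fst_in_01:
  assumes "is_vertex M z"
  obtains i where "fst (z i) \<in> {0, 1}"
proof (rule ccontr)
  assume "\<not> thesis"
  with that have "homothety 1 1 0 z = z"
    by (intro vertex_fixed_by_homothety[OF assms]) auto
  then have "fst (homothety 1 1 0 z P1) = fst (z P1)" by simp
  then show False by (simp add: homothety_def)
qed

lemma vertex_snd_in_01:
  assumes "is_vertex M z"
  obtains i where "snd (z i) \<in> {0, 1}"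
proof (rule ccontr)
  assume "\<not> thesis"
  with that have "homothety 1 0 1 z = z"
    by (intro vertex_fixed_by_homothety[OF assms]) auto
  then have "snd (homothety 1 0 1 z P1) = snd (z P1)" by simp
  then show False by (simp add: homothety_def)
qed

lemma vertex_spans_unit_interval:
  assumes "is_vertex M z" and "z i \<noteq> z j"
  shows "(\<exists>i j. fst (z i) = 0 \<and> fst (z j) = 1) \<or> (\<exists>i j. snd (z i) = 0 \<and> snd (z j) = 1)"
proof (rule ccontr)
  assume no_span: "\<not> ?thesis"
  \<comment> \<open>Every coordinate pinned by a fixation equals x0 resp. y0, so the homothety of ratio 2
    centred at (x0, y0) preserves all fixations.\<close>
  define x0 where "x0 = (if \<exists>i. fst (z i) = 1 then 1 else (0::real))"
  define y0 where "y0 = (if \<exists>i. snd (z i) = 1 then 1 else (0::real))"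
  have "homothety 2 (- x0) (- y0) z = z"
    using no_span by (intro vertex_fixed_by_homothety[OF assms(1)]) (auto simp: x0_def y0_def)
  then have "- x0 + 2 * fst (z k) = fst (z k)" "- y0 + 2 * snd (z k) = snd (z k)" for k
    by (metis homothety_def fst_conv snd_conv)+
  then have "z k = (x0, y0)" for k by (simp add: prod_eq_iff)
  with assms(2) show False by simp
qed

lemma sat_MoveEq_parallel:
  assumes "sat (MoveEq m i j) z" and "m \<noteq> (0, 0)"
  obtains s where "fst (z j) - fst (z i) = s * of_int (fst m)"
    and "snd (z j) - snd (z i) = s * of_int (snd m)"
proof -
  obtain c d where m: "m = (c, d)" by fastforce
  define X where "X = fst (z j) - fst (z i)"
  define Y where "Y = snd (z j) - snd (z i)"
  have XY: "X * of_int d = Y * of_int c" using assms(1) by (simp add: m X_def Y_def)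
  have nz: "(of_int c)\<^sup>2 + (of_int d)\<^sup>2 \<noteq> (0::real)" using assms(2) by (simp add: m)
  define s where "s = (X * of_int c + Y * of_int d) / ((of_int c)\<^sup>2 + (of_int d)\<^sup>2)"
  have "X * ((of_int c)\<^sup>2 + (of_int d)\<^sup>2) = (X * of_int c + Y * of_int d) * of_int c"
       "Y * ((of_int c)\<^sup>2 + (of_int d)\<^sup>2) = (X * of_int c + Y * of_int d) * of_int d"
    using XY by (simp_all add: algebra_simps power2_eq_square)
  then have "X = s * of_int c" "Y = s * of_int d"
    using nz by (simp_all add: s_def field_simps)
  with that show ?thesis unfolding X_def Y_def m fst_conv snd_conv by blast
qed

lemma independent_moves_coeffs_zero:
  fixes A B :: real and a b :: "int \<times> int"
  assumes "A * of_int (fst a) + B * of_int (fst b) = 0" "A * of_int (snd a) + B * of_int (snd b) = 0"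
    and "fst a * snd b \<noteq> snd a * fst b"
  shows "A = 0" "B = 0"
proof -
  define det :: real where "det = of_int (fst a * snd b - snd a * fst b)"
  have "det \<noteq> 0" unfolding det_def of_int_eq_0_iff using assms(3) by simp
  have "A * det = (A * of_int (fst a) + B * of_int (fst b)) * of_int (snd b)
      - (A * of_int (snd a) + B * of_int (snd b)) * of_int (fst b)"
    and "B * det = (A * of_int (snd a) + B * of_int (snd b)) * of_int (fst a)
      - (A * of_int (fst a) + B * of_int (fst b)) * of_int (snd a)"
    by (simp_all add: det_def algebra_simps)
  with assms(1,2) have "A * det = 0" "B * det = 0" by simp_all
  with \<open>det \<noteq> 0\<close> show "A = 0" "B = 0" by simp_all
qed

lemma rider_piece_coprime:
  assumes "rider_piece M" "(c, d) \<in> M"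
  shows "gcd c d = 1"
  using assms unfolding rider_piece_def by auto

lemma rider_piece_not_parallel:
  assumes "rider_piece M" "(c, d) \<in> M" "(c', d') \<in> M" "(c, d) \<noteq> (c', d')"
  shows "c * d' \<noteq> d * c'"
  using assms unfolding rider_piece_def by fast

(* Under the weight relation its sides are w a \<cdot> a, w b \<cdot> b and w c \<cdot> c, up to sign. *)
definition weighted_triangle ::
    "(int \<times> int \<Rightarrow> int) \<Rightarrow> int \<times> int \<Rightarrow> int \<times> int \<Rightarrow> piece \<Rightarrow> int \<times> int" where
  "weighted_triangle w a b k = (case k of
     P1 \<Rightarrow> (0, 0) | P2 \<Rightarrow> (w a * fst a, w a * snd a) | P3 \<Rightarrow> (- w b * fst b, - w b * snd b))"

definition translate_of_scaled :: "config \<Rightarrow> real \<Rightarrow> (piece \<Rightarrow> int \<times> int) \<Rightarrow> bool" where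
  "translate_of_scaled z l p \<longleftrightarrow> (\<forall>i j.
     fst (z j) - fst (z i) = l * of_int (fst (p j) - fst (p i)) \<and>
     snd (z j) - snd (z i) = l * of_int (snd (p j) - snd (p i)))"

lemma relation_proportional_to_weights:
  fixes s t u :: real and a b c :: "int \<times> int" and w :: "int \<times> int \<Rightarrow> int"
  assumes "s * of_int (fst a) + t * of_int (fst b) + u * of_int (fst c) = 0"
    and "s * of_int (snd a) + t * of_int (snd b) + u * of_int (snd c) = 0"
    and "fst a * snd b \<noteq> snd a * fst b" and "w c \<noteq> 0"
    and "w a * fst a + w b * fst b + w c * fst c = 0"
    and "w a * snd a + w b * snd b + w c * snd c = 0"
  shows "s = u / of_int (w c) * of_int (w a)" and "t = u / of_int (w c) * of_int (w b)"
proof -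
  define l where "l = u / of_int (w c)"
  have u: "u = l * of_int (w c)" using assms(4) by (simp add: l_def)
  have rel: "of_int (w c) * of_int (fst c)
      = - of_int (w a) * of_int (fst a) - of_int (w b) * (of_int (fst b) :: real)"
    "of_int (w c) * of_int (snd c)
      = - of_int (w a) * of_int (snd a) - of_int (w b) * (of_int (snd b) :: real)"
    using assms(5,6)
    by (simp_all add: algebra_simps flip: of_int_mult of_int_add of_int_minus of_int_diff)
  from assms(1,2)
  have "(s - l * of_int (w a)) * of_int (fst a) + (t - l * of_int (w b)) * of_int (fst b) = 0"
    "(s - l * of_int (w a)) * of_int (snd a) + (t - l * of_int (w b)) * of_int (snd b) = 0"
    unfolding u mult.assoc rel by (simp_all add: algebra_simps)
  from independent_moves_coeffs_zero[OF this assms(3)]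
  show "s = u / of_int (w c) * of_int (w a)" "t = u / of_int (w c) * of_int (w b)"
    by (simp_all add: l_def)
qed

lemma triangle_translate_of_scaled_weighted_triangle:
  fixes a b c :: "int \<times> int" and w :: "int \<times> int \<Rightarrow> int"
  defines "p \<equiv> weighted_triangle w a b"
  assumes "sat (MoveEq a P1 P2) z" "sat (MoveEq b P1 P3) z" "sat (MoveEq c P2 P3) z"
    and "a \<noteq> (0, 0)" "b \<noteq> (0, 0)" "c \<noteq> (0, 0)"
    and "fst a * snd b \<noteq> snd a * fst b" and "w c \<noteq> 0"
    and "w a * fst a + w b * fst b + w c * fst c = 0"
    and "w a * snd a + w b * snd b + w c * snd c = 0"
  obtains l where "translate_of_scaled z l p"
proof -
  obtain s where s: "fst (z P2) - fst (z P1) = s * of_int (fst a)"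
    "snd (z P2) - snd (z P1) = s * of_int (snd a)"
    using sat_MoveEq_parallel[OF assms(2,5)] .
  obtain t where t: "fst (z P3) - fst (z P1) = t * of_int (fst b)"
    "snd (z P3) - snd (z P1) = t * of_int (snd b)"
    using sat_MoveEq_parallel[OF assms(3,6)] .
  obtain u where u: "fst (z P3) - fst (z P2) = u * of_int (fst c)"
    "snd (z P3) - snd (z P2) = u * of_int (snd c)"
    using sat_MoveEq_parallel[OF assms(4,7)] .
  define l where "l = u / of_int (w c)"
  have "s * of_int (fst a) + (- t) * of_int (fst b) + u * of_int (fst c) = 0"
    "s * of_int (snd a) + (- t) * of_int (snd b) + u * of_int (snd c) = 0"
    using s t u by simp_all
  from relation_proportional_to_weights[OF this assms(8-11)]
  have "s = l * of_int (w a)" "t = - l * of_int (w b)" by (simp_all add: l_def)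
  then have x: "fst (z k) = fst (z P1) + l * of_int (fst (p k))"
    and y: "snd (z k) = snd (z P1) + l * of_int (snd (p k))" for k
    using s t by (cases k; simp add: p_def weighted_triangle_def algebra_simps)+
  have "translate_of_scaled z l p"
    unfolding translate_of_scaled_def
  proof (intro allI conjI)
    show "fst (z j) - fst (z i) = l * of_int (fst (p j) - fst (p i))" for i j
      by (subst (1 2) x) (simp add: algebra_simps)
    show "snd (z j) - snd (z i) = l * of_int (snd (p j) - snd (p i))" for i j
      by (subst (1 2) y) (simp add: algebra_simps)
  qed
  with that show ?thesis .
qed

definition coord_diffs :: "(piece \<Rightarrow> int \<times> int) \<Rightarrow> int set" where
  "coord_diffs p = (\<Union>i j. {fst (p j) - fst (p i), snd (p j) - snd (p i)})"

lemma finite_coord_diffs [simp]: "finite (coord_diffs p)"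
  by (simp add: coord_diffs_def)

lemma coord_diffsE:
  assumes "\<delta> \<in> coord_diffs p"
  obtains i j where "\<delta> = fst (p j) - fst (p i) \<or> \<delta> = snd (p j) - snd (p i)"
  using assms unfolding coord_diffs_def by blast

lemma translate_of_scaled_abs_scale:
  assumes scaled: "translate_of_scaled z l p"
    and box: "in_box z"
    and span: "(\<exists>i j. fst (z i) = 0 \<and> fst (z j) = 1) \<or> (\<exists>i j. snd (z i) = 0 \<and> snd (z j) = 1)"
  shows "\<bar>l\<bar> * of_int (Max (abs ` coord_diffs p)) = 1"
proof -
  define N where "N = Max (abs ` coord_diffs p)"
  have unit: "0 \<le> fst (z k)" "fst (z k) \<le> 1" "0 \<le> snd (z k)" "snd (z k) \<le> 1" for k
    using box by (auto simp: in_box_def)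
  have abs_diff: "\<bar>l\<bar> * of_int \<bar>fst (p j) - fst (p i)\<bar> = \<bar>fst (z j) - fst (z i)\<bar>"
    "\<bar>l\<bar> * of_int \<bar>snd (p j) - snd (p i)\<bar> = \<bar>snd (z j) - snd (z i)\<bar>" for i j
    using scaled unfolding translate_of_scaled_def by (simp_all add: abs_mult)
  have diff_le: "\<bar>l\<bar> * of_int \<bar>\<delta>\<bar> \<le> 1" if "\<delta> \<in> coord_diffs p" for \<delta>
  proof -
    from that obtain i j where "\<delta> = fst (p j) - fst (p i) \<or> \<delta> = snd (p j) - snd (p i)"
      by (rule coord_diffsE)
    moreover have "\<bar>fst (z j) - fst (z i)\<bar> \<le> 1" "\<bar>snd (z j) - snd (z i)\<bar> \<le> 1"
      unfolding abs_le_iff using unit[of i] unit[of j] by auto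
    ultimately show ?thesis using abs_diff[of j i] by auto
  qed
  have "N \<in> abs ` coord_diffs p" unfolding N_def
    by (rule Max_in) (auto simp: coord_diffs_def)
  then have "\<bar>l\<bar> * of_int N \<le> 1" using diff_le by auto
  moreover have "1 \<le> \<bar>l\<bar> * of_int N"
  proof -
    from span obtain i j where "fst (z i) = 0 \<and> fst (z j) = 1 \<or> snd (z i) = 0 \<and> snd (z j) = 1"
      by blast
    then have "\<bar>l\<bar> * of_int \<bar>fst (p j) - fst (p i)\<bar> = 1 \<or> \<bar>l\<bar> * of_int \<bar>snd (p j) - snd (p i)\<bar> = 1"
      using abs_diff[of j i] by auto
    moreover have "fst (p j) - fst (p i) \<in> coord_diffs p" "snd (p j) - snd (p i) \<in> coord_diffs p"
      unfolding coord_diffs_def by blast+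
    ultimately obtain \<delta> where "\<delta> \<in> coord_diffs p" and \<delta>: "\<bar>l\<bar> * of_int \<bar>\<delta>\<bar> = 1"
      by blast
    then have "\<bar>\<delta>\<bar> \<le> N" unfolding N_def by (intro Max_ge) auto
    then have "\<bar>l\<bar> * of_int \<bar>\<delta>\<bar> \<le> \<bar>l\<bar> * of_int N" by (intro mult_left_mono) auto
    with \<delta> show ?thesis by simp
  qed
  ultimately show ?thesis by (simp add: N_def)
qed

lemma abs_scale_eq_1_cases:
  fixes l :: real and N :: int
  assumes "\<bar>l\<bar> * of_int N = 1"
  shows "N > 0" and "l = 1 / of_int N \<or> l = - 1 / of_int N"
proof -
  show "N > 0"
  proof (rule ccontr)
    assume "\<not> N > 0"
    then have "\<bar>l\<bar> * of_int N \<le> 0" by (simp add: mult_nonneg_nonpos)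
    with assms show False by simp
  qed
  then show "l = 1 / of_int N \<or> l = - 1 / of_int N"
    using assms by (auto simp: field_simps abs_if split: if_splits)
qed

lemma translate_of_scaled_clears_denominators:
  fixes N :: int
  assumes scaled: "translate_of_scaled z l p" and scale: "\<bar>l\<bar> * of_int N = 1"
    and "fst (z i0) \<in> {0, 1}" and "snd (z j0) \<in> {0, 1}"
  shows "clears_denominators (of_int N) z"
  unfolding clears_denominators_def
proof
  fix k
  have "of_int N * l \<in> \<int>"
    using abs_scale_eq_1_cases[OF scale] by auto
  then have "of_int N * (fst (z k) - fst (z i0)) \<in> \<int>" "of_int N * (snd (z k) - snd (z j0)) \<in> \<int>"
    using scaled unfolding translate_of_scaled_def by (simp_all add: mult.assoc[symmetric])
  then have "of_int N * (fst (z k) - fst (z i0)) + of_int N * fst (z i0) \<in> \<int>"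
    and "of_int N * (snd (z k) - snd (z j0)) + of_int N * snd (z j0) \<in> \<int>"
    using assms(3,4) by (auto intro!: Ints_add)
  then show "of_int N * fst (z k) \<in> \<int> \<and> of_int N * snd (z k) \<in> \<int>"
    by (simp add: algebra_simps)
qed

lemma translate_of_scaled_denominator_dvd:
  fixes N D :: int
  assumes scaled: "translate_of_scaled z l p" and scale: "\<bar>l\<bar> * of_int N = 1"
    and coprime: "Gcd (coord_diffs p) = 1"
    and clears: "clears_denominators (of_int D) z"
  shows "N dvd D"
proof -
  have "N dvd D * \<delta>" if "\<delta> \<in> coord_diffs p" for \<delta>
  proof -
    from that obtain i j where "\<delta> = fst (p j) - fst (p i) \<or> \<delta> = snd (p j) - snd (p i)"
      by (rule coord_diffsE)
    moreover have "of_int D * (fst (z j) - fst (z i)) \<in> \<int>" "of_int D * (snd (z j) - snd (z i)) \<in> \<int>"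
      using clears unfolding clears_denominators_def by (metis Ints_diff right_diff_distrib)+
    ultimately have "of_int D * (l * of_int \<delta>) \<in> \<int>"
      using scaled unfolding translate_of_scaled_def by auto
    moreover have "of_int (D * \<delta>) / of_int N = of_int D * (l * of_int \<delta>)
        \<or> of_int (D * \<delta>) / of_int N = - (of_int D * (l * of_int \<delta>))"
      using abs_scale_eq_1_cases(2)[OF scale] by auto
    ultimately have "(of_int (D * \<delta>) / of_int N :: real) \<in> \<int>" by auto
    then show ?thesis
      using abs_scale_eq_1_cases(1)[OF scale] by (simp only: of_int_div_of_int_in_Ints_iff) simp
  qed
  then have "N dvd Gcd ((*) D ` coord_diffs p)" by (simp add: dvd_Gcd_iff)
  then show ?thesis by (simp add: Gcd_mult coprime)
qed

lemma Delta_of_translate_of_scaled: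
  fixes N :: int
  assumes "translate_of_scaled z l p" and "\<bar>l\<bar> * of_int N = 1"
    and "Gcd (coord_diffs p) = 1"
    and "fst (z i0) \<in> {0, 1}" and "snd (z j0) \<in> {0, 1}"
  shows "int (Delta z) = N"
proof -
  have "N > 0" using assms(2) by (rule abs_scale_eq_1_cases)
  have "Delta z = nat N"
  proof (rule Delta_eqI)
    show "clears_denominators (of_nat (nat N)) z"
      using translate_of_scaled_clears_denominators[OF assms(1,2,4,5)] \<open>N > 0\<close> by simp
    show "nat N dvd D" if "clears_denominators (of_nat D) z" for D
      using translate_of_scaled_denominator_dvd[OF assms(1-3), of "int D"] that \<open>N > 0\<close>
      by (simp add: nat_dvd_iff)
  qed (use \<open>N > 0\<close> in simp)
  with \<open>N > 0\<close> show ?thesis by simp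
qed

lemma coord_diffs_weighted_triangle:
  assumes "w a * fst a + w b * fst b + w c * fst c = 0"
    and "w a * snd a + w b * snd b + w c * snd c = 0"
  defines "S \<equiv> (\<Union>m\<in>{a, b, c}. {w m * fst m, w m * snd m})"
  shows "coord_diffs (weighted_triangle w a b) = insert 0 (S \<union> uminus ` S)"
proof -
  have "S = {w a * fst a, w a * snd a, w b * fst b, w b * snd b,
      - (w a * fst a) - w b * fst b, - (w a * snd a) - w b * snd b}"
    unfolding S_def using assms(1,2) by (auto simp: eq_neg_iff_add_eq_0 algebra_simps)
  then show ?thesis
    unfolding coord_diffs_def weighted_triangle_def UNIV_piece by (auto simp: algebra_simps)
qed

lemma Max_abs_coord_diffs_weighted_triangle:
  assumes "w a * fst a + w b * fst b + w c * fst c = 0"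
    and "w a * snd a + w b * snd b + w c * snd c = 0"
  shows "Max (abs ` coord_diffs (weighted_triangle w a b))
    = Max (\<Union>m\<in>{a, b, c}. {\<bar>w m * fst m\<bar>, \<bar>w m * snd m\<bar>})"
proof -
  define S where "S = (\<Union>m\<in>{a, b, c}. {w m * fst m, w m * snd m})"
  have "finite S" "w a * fst a \<in> S" unfolding S_def by auto
  have "Max (abs ` coord_diffs (weighted_triangle w a b)) = Max (insert 0 (abs ` S))"
    unfolding coord_diffs_weighted_triangle[OF assms] S_def[symmetric]
    by (simp add: image_Un image_image)
  also have "\<dots> = Max (abs ` S)"
  proof -
    have "0 \<le> \<bar>w a * fst a\<bar>" by simp
    also have "\<dots> \<le> Max (abs ` S)" using \<open>finite S\<close> \<open>w a * fst a \<in> S\<close> by simp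
    finally have "0 \<le> Max (abs ` S)" .
    moreover have "S \<noteq> {}" using \<open>w a * fst a \<in> S\<close> by blast
    ultimately show ?thesis using \<open>finite S\<close> by (simp add: max_absorb2)
  qed
  also have "abs ` S = (\<Union>m\<in>{a, b, c}. {\<bar>w m * fst m\<bar>, \<bar>w m * snd m\<bar>})"
    unfolding S_def by auto
  finally show ?thesis .
qed

lemma dvd_of_dvd_mult_coprime:
  fixes g w c d :: int
  assumes "g dvd w * c" "g dvd w * d" "gcd c d = 1"
  shows "g dvd w"
proof -
  have "g dvd gcd (w * c) (w * d)" using assms(1,2) by (rule gcd_greatest)
  also have "gcd (w * c) (w * d) = \<bar>w\<bar>" using gcd_mult_distrib_int[of w c d] assms(3) by simp
  finally show ?thesis by simp
qed

lemma Gcd_eq_1_if_weighted_moves_in: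
  fixes w :: "int \<times> int \<Rightarrow> int" and A :: "int set"
  assumes "\<And>m. m \<in> S \<Longrightarrow> gcd (fst m) (snd m) = 1"
    and "Gcd (w ` S) = 1"
    and "\<And>m. m \<in> S \<Longrightarrow> w m * fst m \<in> A \<and> w m * snd m \<in> A"
  shows "Gcd A = 1"
proof -
  have "Gcd A dvd w m" if "m \<in> S" for m
  proof (rule dvd_of_dvd_mult_coprime)
    show "Gcd A dvd w m * fst m" "Gcd A dvd w m * snd m"
      using assms(3)[OF that] by (simp_all add: Gcd_dvd)
    show "gcd (fst m) (snd m) = 1" using that by (rule assms(1))
  qed
  then have "Gcd A dvd Gcd (w ` S)" by (auto intro: Gcd_greatest)
  then have "\<bar>Gcd A\<bar> = 1" unfolding assms(2) by simp
  then show ?thesis by simp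
qed

lemma triangle_vertex:
  assumes "{a, b, c} \<subseteq> M" and "fixation f1" "fixation f2" "fixation f3"
    and "in_box z"
    and "solutions {MoveEq a P1 P2, MoveEq b P1 P3, MoveEq c P2 P3, f1, f2, f3} = {z}"
  shows "is_vertex M z"
  unfolding is_vertex_def
proof (intro conjI exI)
  show "\<forall>e\<in>{MoveEq a P1 P2, MoveEq b P1 P3, MoveEq c P2 P3, f1, f2, f3}. move_eqn M e \<or> fixation e"
    using assms(1-4) unfolding move_eqn_def by blast
qed (fact assms(5,6))+

lemma Delta_triangular_vertex:
  fixes a b c :: "int \<times> int" and w :: "int \<times> int \<Rightarrow> int"
  assumes vertex: "is_vertex M z"
    and moves: "sat (MoveEq a P1 P2) z" "sat (MoveEq b P1 P3) z" "sat (MoveEq c P2 P3) z"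
    and "z P1 \<noteq> z P2" and distinct: "distinct [a, b, c]"
    and coprime: "\<And>m. m \<in> {a, b, c} \<Longrightarrow> gcd (fst m) (snd m) = 1"
    and independent: "fst a * snd b \<noteq> snd a * fst b"
    and nonzero: "\<And>m. m \<in> {a, b, c} \<Longrightarrow> w m \<noteq> 0"
    and weights_coprime: "Gcd (w ` {a, b, c}) = 1"
    and sums: "(\<Sum>m\<in>{a, b, c}. w m * fst m) = 0" "(\<Sum>m\<in>{a, b, c}. w m * snd m) = 0"
  shows "int (Delta z) = Max (\<Union>m\<in>{a, b, c}. {\<bar>w m * fst m\<bar>, \<bar>w m * snd m\<bar>})"
proof -
  define p where "p = weighted_triangle w a b"
  have relation: "w a * fst a + w b * fst b + w c * fst c = 0"
    "w a * snd a + w b * snd b + w c * snd c = 0"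
    using distinct sums by (simp_all add: add.assoc)
  have "m \<noteq> (0, 0)" if "m \<in> {a, b, c}" for m using coprime[OF that] by auto
  then obtain l where scaled: "translate_of_scaled z l p"
    using triangle_translate_of_scaled_weighted_triangle[OF moves _ _ _ independent _ relation]
      nonzero[of c] unfolding p_def by blast
  have gcd: "Gcd (coord_diffs p) = 1"
    using coprime weights_coprime
    by (rule Gcd_eq_1_if_weighted_moves_in) (auto simp: p_def coord_diffs_weighted_triangle[OF relation])
  have "in_box z" using vertex by (simp add: is_vertex_def)
  then have "\<bar>l\<bar> * of_int (Max (abs ` coord_diffs p)) = 1"
    using scaled vertex_spans_unit_interval[OF vertex \<open>z P1 \<noteq> z P2\<close>] translate_of_scaled_abs_scale
    by blast
  moreover obtain i0 where "fst (z i0) \<in> {0, 1}" using vertex_fst_in_01[OF vertex] .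
  moreover obtain j0 where "snd (z j0) \<in> {0, 1}" using vertex_snd_in_01[OF vertex] .
  ultimately have "int (Delta z) = Max (abs ` coord_diffs p)"
    using Delta_of_translate_of_scaled[OF scaled _ gcd] by blast
  then show ?thesis unfolding p_def Max_abs_coord_diffs_weighted_triangle[OF relation] .
qed

theorem proposition5p1:
  fixes M :: "(int \<times> int) set" and c1 d1 c2 d2 c3 d3 w1 w2 w3 :: int and z :: config
  assumes "rider_piece M"
    and "(c1,d1) \<in> M" and "(c2,d2) \<in> M" and "(c3,d3) \<in> M"
    and "(c1,d1) \<noteq> (c2,d2)" and "(c1,d1) \<noteq> (c3,d3)" and "(c2,d2) \<noteq> (c3,d3)"
    and "w1 \<noteq> 0" and "w2 \<noteq> 0" and "w3 \<noteq> 0"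
    and "gcd w1 (gcd w2 w3) = 1"
    and "w1 * c1 + w2 * c2 + w3 * c3 = 0" and "w1 * d1 + w2 * d2 + w3 * d3 = 0"
    and "in_box z"
    and "(fst (z P2) - fst (z P1)) * (snd (z P3) - snd (z P1))
         - (snd (z P2) - snd (z P1)) * (fst (z P3) - fst (z P1)) \<noteq> 0"
    and "\<exists>a b c f1 f2 f3. {a, b, c} = {(c1,d1), (c2,d2), (c3,d3)}
           \<and> fixation f1 \<and> fixation f2 \<and> fixation f3
           \<and> solutions {MoveEq a P1 P2, MoveEq b P1 P3, MoveEq c P2 P3, f1, f2, f3} = {z}"
  shows "is_vertex M z \<and>
    int (Delta z) = max \<bar>w1 * c1\<bar> (max \<bar>w1 * d1\<bar> (max \<bar>w2 * c2\<bar>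
                     (max \<bar>w2 * d2\<bar> (max \<bar>w3 * c3\<bar> \<bar>w3 * d3\<bar>))))"
proof -
  obtain a b c f1 f2 f3 where abc: "{a, b, c} = {(c1,d1), (c2,d2), (c3,d3)}"
    and fixations: "fixation f1" "fixation f2" "fixation f3"
    and sol: "solutions {MoveEq a P1 P2, MoveEq b P1 P3, MoveEq c P2 P3, f1, f2, f3} = {z}"
    using assms(16) by blast
  have in_M: "{a, b, c} \<subseteq> M" unfolding abc using assms(2-4) by blast
  have vertex: "is_vertex M z" using in_M fixations assms(14) sol by (rule triangle_vertex)
  have "card {a, b, c} = 3" unfolding abc using assms(5-7) by simp
  then have distinct: "distinct [a, b, c]" by (intro card_distinct) simp
  define w where "w m = (if m = (c1, d1) then w1 else if m = (c2, d2) then w2 else w3)" for m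
  have weights: "w (c1, d1) = w1" "w (c2, d2) = w2" "w (c3, d3) = w3"
    and not_in: "(c1, d1) \<notin> {(c2, d2), (c3, d3)}" "(c2, d2) \<notin> {(c3, d3)}"
    using assms(5-7) by (auto simp: w_def)
  have "int (Delta z) = Max (\<Union>m\<in>{a, b, c}. {\<bar>w m * fst m\<bar>, \<bar>w m * snd m\<bar>})"
  proof (rule Delta_triangular_vertex[OF vertex _ _ _ _ distinct])
    show "sat (MoveEq a P1 P2) z" "sat (MoveEq b P1 P3) z" "sat (MoveEq c P2 P3) z"
      using sol unfolding solutions_def by auto
    show "z P1 \<noteq> z P2" using assms(15) by auto
    show "gcd (fst m) (snd m) = 1" if "m \<in> {a, b, c}" for m
      using rider_piece_coprime[OF assms(1), of "fst m" "snd m"] in_M that by auto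
    show "fst a * snd b \<noteq> snd a * fst b"
      using rider_piece_not_parallel[OF assms(1), of "fst a" "snd a" "fst b" "snd b"] in_M distinct
      by simp
  qed (use assms(8-13) not_in in \<open>auto simp: abc weights\<close>)
  also have "\<dots> = Max {\<bar>w1 * c1\<bar>, \<bar>w1 * d1\<bar>, \<bar>w2 * c2\<bar>, \<bar>w2 * d2\<bar>, \<bar>w3 * c3\<bar>, \<bar>w3 * d3\<bar>}"
    unfolding abc
    by (simp only: UN_insert UN_empty Un_empty_right Un_insert_left Un_empty_left weights fst_conv snd_conv)
  also have "\<dots> = max \<bar>w1 * c1\<bar> (max \<bar>w1 * d1\<bar> (max \<bar>w2 * c2\<bar>
                     (max \<bar>w2 * d2\<bar> (max \<bar>w3 * c3\<bar> \<bar>w3 * d3\<bar>))))"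
    by (simp only: Max.insert finite_insert finite.emptyI insert_not_empty Max_singleton
        not_False_eq_True)
  finally show ?thesis using vertex by blast
qed

end
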